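(* Let $r_0,r_1,r_2\ge 1$ and $L=\mathfrak{g}(r_0,r_1,r_2)$. Then $$b(L)=\begin{cases} r_1(r_0+r_2-r_1) & \text{if } r_1<r_0 \text{ and } r_1<r_2,\\ r_0r_2 & \text{if } r_1\ge r_0 \text{ or } r_1\ge r_2.\end{cases}$$
   Context: All Lie algebras are over an algebraically closed field $\mathbf{k}$ of characteristic zero. $\mathcal{P}(r_0,r_1,r_2)$ is the poset on $\{b_1,\dots,b_{r_0},m_1,\dots,m_{r_1},t_1,\dots,t_{r_2}\}$ whose strict relations are exactly $b_i\prec m_j$, $m_j\prec t_k$ and $b_i\prec t_k$ for all $i,j,k$. $\mathfrak{g}(r_0,r_1,r_2)$ denotes the nilpotent Lie poset algebra $\mathfrak{g}^{\prec}(\mathcal{P}(r_0,r_1,r_2))$: the Lie algebra under the commutator bracket spanned by matrix units $E_{p,q}$ with $p\prec q$. The breadth of a Lie algebra $L$ is $b(L)=\max_{x\in L}\operatorname{rank}(\mathrm{ad}_x)$, where $\mathrm{ad}_x=[x,-]$. *)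

theory Defs
  imports "HOL-Library.Function_Algebras" "HOL-Computational_Algebra.Polynomial"
begin

definition alg_closed :: "'k::field itself \<Rightarrow> bool" where
  "alg_closed _ \<longleftrightarrow> (\<forall>p :: 'k poly. degree p > 0 \<longrightarrow> (\<exists>x. poly p x = 0))"

type_synonym ('a, 'k) pmat = "'a \<Rightarrow> 'a \<Rightarrow> 'k"

definition mscale :: "'k::field \<Rightarrow> ('a, 'k) pmat \<Rightarrow> ('a, 'k) pmat" where
  "mscale c A = (\<lambda>p q. c * A p q)"

definition munit :: "'a \<Rightarrow> 'a \<Rightarrow> ('a, 'k::field) pmat" where
  "munit p q = (\<lambda>i j. if i = p \<and> j = q then 1 else 0)"

definition mmult :: "'a set \<Rightarrow> ('a, 'k::field) pmat \<Rightarrow> ('a, 'k) pmat \<Rightarrow> ('a, 'k) pmat" where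
  "mmult P A B = (\<lambda>p q. \<Sum>r\<in>P. A p r * B r q)"

definition commutator :: "'a set \<Rightarrow> ('a, 'k::field) pmat \<Rightarrow> ('a, 'k) pmat \<Rightarrow> ('a, 'k) pmat" where
  "commutator P A B = mmult P A B - mmult P B A"

definition lie_poset_alg :: "'a set \<Rightarrow> ('a \<Rightarrow> 'a \<Rightarrow> bool) \<Rightarrow> ('a, 'k::field) pmat set" where
  "lie_poset_alg P prec =
     module.span (mscale :: 'k \<Rightarrow> _) {munit p q | p q. p \<in> P \<and> q \<in> P \<and> prec p q}"

definition ad_rank :: "'a set \<Rightarrow> ('a, 'k::field) pmat set \<Rightarrow> ('a, 'k) pmat \<Rightarrow> nat" where
  "ad_rank P L x = vector_space.dim (mscale :: 'k \<Rightarrow> _) ((\<lambda>y. commutator P x y) ` L)"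

definition breadth :: "'a set \<Rightarrow> ('a, 'k::field) pmat set \<Rightarrow> nat" where
  "breadth P L = Max {ad_rank P L x | x. x \<in> L}"

text \<open>The poset P(r0,r1,r2): elements (0,i) = b_{i+1} (i<r0), (1,j) = m_{j+1} (j<r1),
  (2,k) = t_{k+1} (k<r2); strict order: (l,i) \<prec> (l',j) iff l < l'.\<close>
definition P3 :: "nat \<Rightarrow> nat \<Rightarrow> nat \<Rightarrow> (nat \<times> nat) set" where
  "P3 r0 r1 r2 = {(0, i) | i. i < r0} \<union> {(1, j) | j. j < r1} \<union> {(2, k) | k. k < r2}"

definition prec3 :: "nat \<times> nat \<Rightarrow> nat \<times> nat \<Rightarrow> bool" where
  "prec3 a b \<longleftrightarrow> fst a < fst b"

definition g3 :: "nat \<Rightarrow> nat \<Rightarrow> nat \<Rightarrow> (nat \<times> nat, 'k::field) pmat set" where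
  "g3 r0 r1 r2 = lie_poset_alg (P3 r0 r1 r2) prec3"

end

theory Submission
  imports Defs
begin

text \<open>
  Split \<open>x \<in> g(r\<^sub>0, r\<^sub>1, r\<^sub>2)\<close> into its blocks \<open>X\<^sub>b\<^sub>m\<close>, \<open>X\<^sub>m\<^sub>t\<close>, \<open>X\<^sub>b\<^sub>t\<close>.
  Then \<open>[x, y] = X\<^sub>b\<^sub>m Y\<^sub>m\<^sub>t - Y\<^sub>b\<^sub>m X\<^sub>m\<^sub>t\<close> lies in the \<open>(b, t)\<close>-block, so the image of
  \<open>ad\<^sub>x\<close> is \<open>U \<otimes> k^r\<^sub>2 + k^r\<^sub>0 \<otimes> V\<close>, where \<open>U\<close> is the column space of \<open>X\<^sub>b\<^sub>m\<close> and \<open>V\<close> the row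
  space of \<open>X\<^sub>m\<^sub>t\<close>. Extending a basis of \<open>U\<close> to one of \<open>k^r\<^sub>0\<close> shows that this space has
  dimension at most \<open>a r\<^sub>2 + (r\<^sub>0 - a) c\<close> with \<open>a = dim U \<le> min r\<^sub>0 r\<^sub>1\<close> and
  \<open>c = dim V \<le> min r\<^sub>1 r\<^sub>2\<close>. The bound is increasing in \<open>a\<close> and \<open>c\<close>, and it is attained when
  both blocks are partial identities of maximal rank, in which case the image contains the
  required number of matrix units.
\<close>

interpretation ms: vector_space "mscale :: 'k::field \<Rightarrow> ('a, 'k) pmat \<Rightarrow> _"
  by unfold_locales (auto simp: mscale_def fun_eq_iff algebra_simps)

definition vscale :: "'k::field \<Rightarrow> ('a \<Rightarrow> 'k) \<Rightarrow> 'a \<Rightarrow> 'k" where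
  "vscale c v = (\<lambda>a. c * v a)"

interpretation vs: vector_space "vscale :: 'k::field \<Rightarrow> ('a \<Rightarrow> 'k) \<Rightarrow> _"
  by unfold_locales (auto simp: vscale_def fun_eq_iff algebra_simps)

lemma sum_apply: "sum f A x = (\<Sum>a\<in>A. f a x)"
  by (induction A rule: infinite_finite_induct) auto

lemma mscale_apply [simp]: "mscale c A p q = c * A p q"
  by (simp add: mscale_def)

lemma munit_apply: "munit p q a b = (if a = p \<and> b = q then 1 else 0)"
  by (simp add: munit_def)

lemma munit_eq_iff: "(munit p q :: ('a, 'k::field) pmat) = munit p' q' \<longleftrightarrow> p = p' \<and> q = q'"
  by (auto simp: munit_def fun_eq_iff)

lemma card_independent_le_dim:
  fixes S V W :: "('a, 'k::field) pmat set"
  assumes "S \<subseteq> V" "ms.independent S" "V \<subseteq> ms.span W" "finite W"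
  shows "card S \<le> ms.dim V"
proof -
  obtain B where B: "B \<subseteq> V" "ms.independent B" "V \<subseteq> ms.span B" "card B = ms.dim V"
    using ms.basis_exists by blast
  have "finite B"
    using ms.independent_span_bound[OF assms(4) B(2)] B(1) assms(3) by blast
  then show ?thesis
    using ms.independent_span_bound[OF _ assms(2)] B assms(1) by fastforce
qed

lemma span_subset_span: "X \<subseteq> ms.span G \<Longrightarrow> ms.span X \<subseteq> ms.span G"
  by (rule ms.span_minimal) simp_all

section \<open>Outer products\<close>

definition vunit :: "'a \<Rightarrow> 'a \<Rightarrow> 'k::field" where
  "vunit p = (\<lambda>a. if a = p then 1 else 0)"

definition outer :: "('a \<Rightarrow> 'k::field) \<Rightarrow> ('a \<Rightarrow> 'k) \<Rightarrow> ('a, 'k) pmat" where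
  "outer u v = (\<lambda>a b. u a * v b)"

lemma munit_eq_outer: "munit p q = outer (vunit p) (vunit q)"
  by (simp add: munit_def outer_def vunit_def fun_eq_iff)

lemma outer_zero_left [simp]: "outer 0 v = 0"
  and outer_zero_right [simp]: "outer u 0 = 0"
  and outer_add_left: "outer (u + u') v = outer u v + outer u' v"
  and outer_add_right: "outer u (v + v') = outer u v + outer u v'"
  and outer_scale_left: "outer (vscale c u) v = mscale c (outer u v)"
  and outer_scale_right: "outer u (vscale c v) = mscale c (outer u v)"
  by (simp_all add: outer_def vscale_def fun_eq_iff algebra_simps)

lemma mem_span_vunit:
  assumes "finite S" "\<And>a. v a \<noteq> 0 \<Longrightarrow> a \<in> S"
  shows "v \<in> vs.span (vunit ` S)"
proof -
  have "(\<Sum>a\<in>S. vscale (v a) (vunit a)) x = (\<Sum>a\<in>S. if a = x then v a else 0)" for x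
    by (simp add: sum_apply vscale_def vunit_def) (rule sum.cong, auto)
  then have "v x = (\<Sum>a\<in>S. vscale (v a) (vunit a)) x" for x
    using assms by (cases "x \<in> S") (auto simp: sum.delta')
  then have "v = (\<Sum>a\<in>S. vscale (v a) (vunit a))" ..
  also have "\<dots> \<in> vs.span (vunit ` S)"
    by (intro vs.span_sum vs.span_scale vs.span_base) auto
  finally show ?thesis .
qed

lemma outer_mem_span:
  assumes "u \<in> vs.span A" "v \<in> vs.span B"
  shows "outer u v \<in> ms.span {outer a b | a b. a \<in> A \<and> b \<in> B}"
proof -
  let ?T = "ms.span {outer a b | a b. a \<in> A \<and> b \<in> B}"
  have sub_left: "vs.subspace {u. outer u w \<in> ?T}" for w
    by (simp add: vs.subspace_def outer_add_left outer_scale_left ms.span_zero ms.span_add ms.span_scale)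
  have sub_right: "vs.subspace {w. outer a w \<in> ?T}" for a
    by (simp add: vs.subspace_def outer_add_right outer_scale_right ms.span_zero ms.span_add ms.span_scale)
  have "outer a v \<in> ?T" if "a \<in> A" for a
    using vs.span_subspace_induct[OF assms(2) sub_right] that by (auto intro: ms.span_base)
  then show ?thesis
    using vs.span_subspace_induct[OF assms(1) sub_left] by auto
qed

lemma dim_le_outer_bound:
  fixes U V E F :: "('a \<Rightarrow> 'k::field) set" and W :: "('a, 'k) pmat set"
  assumes "finite E" "finite F" "U \<subseteq> vs.span E" "V \<subseteq> vs.span F"
    and "W \<subseteq> ms.span ({outer u f | u f. u \<in> U \<and> f \<in> F} \<union> {outer e v | e v. e \<in> E \<and> v \<in> V})"
  shows "ms.dim W \<le> vs.dim U * card F + (card E - vs.dim U) * vs.dim V"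
proof -
  \<comment> \<open>With a basis \<open>B1\<close> of \<open>U\<close> completed by \<open>C\<close> to a basis of \<open>span (B1 \<union> E)\<close>, the
    products with left factor in \<open>B1\<close> are already covered by \<open>B1 \<otimes> F\<close>, so
    \<open>(B1 \<otimes> F) \<union> (C \<otimes> B3)\<close> spans \<open>W\<close>.\<close>
  obtain B1 where B1: "B1 \<subseteq> U" "vs.independent B1" "U \<subseteq> vs.span B1" "card B1 = vs.dim U"
    using vs.basis_exists by blast
  obtain B2 where B2: "B1 \<subseteq> B2" "B2 \<subseteq> B1 \<union> E" "vs.independent B2" "B1 \<union> E \<subseteq> vs.span B2"
    using vs.maximal_independent_subset_extend[OF _ B1(2), of "B1 \<union> E"] by blast
  obtain B3 where B3: "B3 \<subseteq> V" "vs.independent B3" "V \<subseteq> vs.span B3" "card B3 = vs.dim V"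
    using vs.basis_exists by blast
  have "B2 \<subseteq> vs.span E"
    using B2(2) B1(1) assms(3) vs.span_superset by blast
  then have fin_B2: "finite B2" and card_B2: "card B2 \<le> card E"
    using vs.independent_span_bound[OF assms(1) B2(3)] by auto
  have fin_B1: "finite B1"
    using B2(1) fin_B2 by (rule finite_subset)
  have fin_B3: "finite B3"
    using vs.independent_span_bound[OF assms(2) B3(2)] B3(1) assms(4) by blast
  define C where "C = B2 - B1"
  have card_C: "card C \<le> card E - vs.dim U"
    unfolding C_def using card_Diff_subset[OF fin_B1 B2(1)] card_B2 B1(4) by simp
  define G where "G = case_prod outer ` (B1 \<times> F) \<union> case_prod outer ` (C \<times> B3)"
  have fin_G: "finite G"
    unfolding G_def C_def using fin_B1 fin_B2 fin_B3 assms(2) by simp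
  have "card G \<le> card (B1 \<times> F) + card (C \<times> B3)"
    unfolding G_def by (rule order_trans[OF card_Un_le add_mono[OF card_image_le card_image_le]])
      (use fin_B1 fin_B2 fin_B3 assms(2) in \<open>auto simp: C_def\<close>)
  then have card_G: "card G \<le> card B1 * card F + card C * card B3"
    by (simp add: card_cartesian_product)
  have left: "outer b f \<in> ms.span G" if "b \<in> vs.span B1" "f \<in> vs.span F" for b f
  proof -
    have "ms.span {outer b' f' | b' f'. b' \<in> B1 \<and> f' \<in> F} \<subseteq> ms.span G"
      by (rule ms.span_mono) (auto simp: G_def)
    then show ?thesis
      using outer_mem_span[OF that] by (rule subsetD)
  qed
  have right: "outer e v \<in> ms.span G" if "e \<in> vs.span B2" "v \<in> vs.span B3" for e v
  proof -
    have "outer b d \<in> ms.span G" if "b \<in> B2" "d \<in> B3" for b d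
    proof (cases "b \<in> C")
      case True
      then show ?thesis
        using that by (intro ms.span_base) (auto simp: G_def)
    next
      case False
      then have "b \<in> vs.span B1"
        using that(1) by (intro vs.span_base) (simp add: C_def)
      moreover have "d \<in> vs.span F"
        using that(2) B3(1) assms(4) by blast
      ultimately show ?thesis
        by (rule left)
    qed
    then have "ms.span {outer b d | b d. b \<in> B2 \<and> d \<in> B3} \<subseteq> ms.span G"
      by (intro span_subset_span) blast
    then show ?thesis
      using outer_mem_span[OF that] by (rule subsetD)
  qed
  have "{outer u f | u f. u \<in> U \<and> f \<in> F} \<union> {outer e v | e v. e \<in> E \<and> v \<in> V} \<subseteq> ms.span G"
  proof safe
    fix u f assume "u \<in> U" "f \<in> F"
    then show "outer u f \<in> ms.span G"
      using B1(3) by (intro left) (auto intro: vs.span_base)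
  next
    fix e v assume "e \<in> E" "v \<in> V"
    then show "outer e v \<in> ms.span G"
      using B2(4) B3(3) by (intro right) auto
  qed
  then have "W \<subseteq> ms.span G"
    using assms(5) span_subset_span by blast
  then have "ms.dim W \<le> card G"
    using fin_G by (rule ms.dim_le_card)
  also have "\<dots> \<le> vs.dim U * card F + (card E - vs.dim U) * vs.dim V"
    using card_G mult_le_mono1[OF card_C, of "card B3"] unfolding B1(4) B3(4) by linarith
  finally show ?thesis .
qed

section \<open>Lie poset algebras\<close>

lemma commutator_linear: "module_hom mscale mscale (commutator P x :: ('a, 'k::field) pmat \<Rightarrow> _)"
  unfolding module_hom_iff
  by (simp add: ms.module_axioms commutator_def mmult_def fun_eq_iff algebra_simps
      sum.distrib sum_distrib_left sum_subtractf)

lemma lie_poset_alg_eq: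
  assumes "finite P"
  shows "lie_poset_alg P prec = {y :: ('a, 'k::field) pmat. \<forall>p q. y p q \<noteq> 0 \<longrightarrow> p \<in> P \<and> q \<in> P \<and> prec p q}"
    (is "_ = ?S")
proof
  let ?Z = "{z \<in> P \<times> P. prec (fst z) (snd z)}"
  have "ms.subspace ?S"
    by (auto simp: ms.subspace_def) (metis add.left_neutral add.right_neutral)+
  then show "lie_poset_alg P prec \<subseteq> ?S"
    unfolding lie_poset_alg_def by (rule ms.span_minimal[rotated]) (auto simp: munit_apply split: if_splits)
  show "?S \<subseteq> lie_poset_alg P prec"
  proof
    fix y assume y: "y \<in> ?S"
    have "(\<Sum>z\<in>?Z. mscale (y (fst z) (snd z)) (munit (fst z) (snd z))) p q = (\<Sum>z\<in>?Z. if z = (p, q) then y p q else 0)" for p q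
      by (simp add: sum_apply munit_apply) (rule sum.cong, auto)
    also have "\<dots> p q = y p q" for p q
      using y assms by (cases "(p, q) \<in> ?Z") (auto simp: sum.delta')
    finally have "y = (\<Sum>z\<in>?Z. mscale (y (fst z) (snd z)) (munit (fst z) (snd z)))"
      by (simp add: fun_eq_iff)
    also have "\<dots> \<in> lie_poset_alg P prec"
      unfolding lie_poset_alg_def by (intro ms.span_sum ms.span_scale ms.span_base) force
    finally show "y \<in> lie_poset_alg P prec" .
  qed
qed

lemma commutator_image_lie_poset_alg:
  "commutator P x ` lie_poset_alg P prec =
     ms.span (commutator P x ` {munit p q | p q. p \<in> P \<and> q \<in> P \<and> prec p q})"
  unfolding lie_poset_alg_def by (rule module_hom.span_image[OF commutator_linear, symmetric])

lemma commutator_munit: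
  assumes "finite P" "p \<in> P" "q \<in> P"
  shows "commutator P x (munit p q) = outer (\<lambda>a. x a p) (vunit q) - outer (vunit p) (x q)"
proof -
  have "(\<Sum>r\<in>P. x a r * munit p q r b) = x a p * vunit q b" for a b
    using assms by (simp add: munit_apply vunit_def if_distrib[of "(*) _"] sum.delta' cong: if_cong)
  moreover have "(\<Sum>r\<in>P. munit p q a r * x r b) = vunit p a * x q b" for a b
    using assms by (simp add: munit_apply vunit_def if_distrib[of "\<lambda>t. t * _"] sum.delta' cong: if_cong)
  ultimately show ?thesis
    by (simp add: commutator_def mmult_def outer_def fun_eq_iff)
qed

lemma independent_munits:
  assumes "finite Z"
  shows "ms.independent (case_prod munit ` Z :: ('a, 'k::field) pmat set)"
proof (rule ms.independent_if_scalars_zero)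
  show "finite (case_prod munit ` Z :: ('a, 'k) pmat set)"
    using assms by simp
  fix c :: "('a, 'k) pmat \<Rightarrow> 'k" and m :: "('a, 'k) pmat"
  assume sum_zero: "(\<Sum>m\<in>case_prod munit ` Z. mscale (c m) m) = 0" and m: "m \<in> case_prod munit ` Z"
  then obtain p q where m_eq: "m = munit p q"
    by auto
  have "0 = (\<Sum>m'\<in>case_prod munit ` Z. c m' * m' p q)"
    using fun_cong[OF fun_cong[OF sum_zero, of p], of q] by (simp add: sum_apply)
  also have "\<dots> = (\<Sum>m'\<in>case_prod munit ` Z. if m' = m then c m else 0)"
    by (rule sum.cong) (auto simp: m_eq munit_apply munit_eq_iff)
  also have "\<dots> = c m"
    using m assms by (simp add: sum.delta')
  finally show "c m = 0" ..
qed

section \<open>The algebra \<open>g(r\<^sub>0, r\<^sub>1, r\<^sub>2)\<close>\<close>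

lemma finite_P3: "finite (P3 r0 r1 r2)"
proof -
  have "P3 r0 r1 r2 \<subseteq> {..2} \<times> {..<max r0 (max r1 r2)}"
    by (auto simp: P3_def)
  then show ?thesis
    by (rule finite_subset) auto
qed

lemma mem_P3 [simp]:
  "(l, i) \<in> P3 r0 r1 r2 \<longleftrightarrow> l = 0 \<and> i < r0 \<or> l = 1 \<and> i < r1 \<or> l = 2 \<and> i < r2"
  by (auto simp: P3_def)

lemma g3_eq:
  "g3 r0 r1 r2 = {y. \<forall>p q. y p q \<noteq> 0 \<longrightarrow> p \<in> P3 r0 r1 r2 \<and> q \<in> P3 r0 r1 r2 \<and> prec3 p q}"
  by (simp add: g3_def lie_poset_alg_eq finite_P3)

context
  fixes r0 r1 r2 :: nat and x :: "(nat \<times> nat, 'k::field) pmat"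
  assumes x: "x \<in> g3 r0 r1 r2"
begin

lemma g3_nonzero: "x p q \<noteq> 0 \<Longrightarrow> p \<in> P3 r0 r1 r2 \<and> q \<in> P3 r0 r1 r2 \<and> fst p < fst q"
  using x unfolding g3_eq prec3_def by blast

lemma g3_column_bottom: "(\<lambda>a. x a (0, i)) = 0"
  using g3_nonzero[of _ "(0, i)"] by fastforce

lemma g3_row_top: "x (2, k) = 0"
proof (rule ccontr)
  assume "x (2, k) \<noteq> 0"
  then obtain l j where "x (2, k) (l, j) \<noteq> 0"
    by fastforce
  then show False
    using g3_nonzero by fastforce
qed

lemma g3_column_middle_in_span: "(\<lambda>a. x a (1, j)) \<in> vs.span (vunit ` Pair 0 ` {..<r0})"
proof (rule mem_span_vunit)
  fix a assume "x a (1, j) \<noteq> 0"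
  then show "a \<in> Pair 0 ` {..<r0}"
    using g3_nonzero[of a "(1, j)"] by (cases a) auto
qed simp

lemma g3_row_middle_in_span: "x (1, j) \<in> vs.span (vunit ` Pair 2 ` {..<r2})"
proof (rule mem_span_vunit)
  fix b assume "x (1, j) b \<noteq> 0"
  then show "b \<in> Pair 2 ` {..<r2}"
    using g3_nonzero[of "(1, j)" b] by (cases b) auto
qed simp


lemma g3_ad_image_subset:
  "commutator (P3 r0 r1 r2) x ` g3 r0 r1 r2 \<subseteq>
     ms.span ({outer (\<lambda>a. x a (1, j)) (vunit (2, k)) | j k. j < r1 \<and> k < r2} \<union>
              {outer (vunit (0, i)) (x (1, j)) | i j. i < r0 \<and> j < r1})"
    (is "_ \<subseteq> ms.span ?T")
proof -
  have "commutator (P3 r0 r1 r2) x (munit p q) \<in> ms.span ?T"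
    if "p \<in> P3 r0 r1 r2" "q \<in> P3 r0 r1 r2" "prec3 p q" for p q
  proof -
    obtain l i l' j where pq: "p = (l, i)" "q = (l', j)"
      by fastforce
    have "outer (\<lambda>a. x a p) (vunit q) \<in> ms.span ?T"
    proof (cases "l = 0")
      case True
      then show ?thesis
        using g3_column_bottom by (simp add: pq ms.span_zero)
    next
      case False
      then have "l = 1" "l' = 2"
        using that by (auto simp: pq prec3_def)
      then show ?thesis
        using that by (intro ms.span_base) (auto simp: pq)
    qed
    moreover have "outer (vunit p) (x q) \<in> ms.span ?T"
    proof (cases "l' = 2")
      case True
      then show ?thesis
        using g3_row_top by (simp add: pq ms.span_zero)
    next
      case False
      then have "l = 0" "l' = 1"
        using that by (auto simp: pq prec3_def)
      then show ?thesis
        using that by (intro ms.span_base) (auto simp: pq)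
    qed
    ultimately show ?thesis
      using that by (simp add: commutator_munit finite_P3 ms.span_diff)
  qed
  then show ?thesis
    unfolding g3_def commutator_image_lie_poset_alg by (intro span_subset_span) blast
qed

end

lemma rank_bound_mono:
  fixes a a' n c c' m :: nat
  assumes "a \<le> a'" "a' \<le> n" "c \<le> c'" "c' \<le> m"
  shows "a * m + (n - a) * c \<le> a' * m + (n - a') * c'"
proof -
  obtain d e where d: "a' = a + d" and e: "n = a' + e"
    using assms(1,2) le_Suc_ex by blast
  have "a * m + (n - a) * c = a * m + d * c + e * c"
    using d e by (simp add: add_mult_distrib)
  also have "\<dots> \<le> a * m + d * m + e * c'"
    using mult_le_mono2[OF order_trans[OF assms(3,4)], of d] mult_le_mono2[OF assms(3), of e] by linarith
  also have "\<dots> = a' * m + (n - a') * c'"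
    using d e by (simp add: add_mult_distrib)
  finally show ?thesis .
qed

lemma rank_bound_max:
  fixes r0 r1 r2 :: nat
  shows "min r0 r1 * r2 + (r0 - min r0 r1) * min r1 r2 =
     (if r1 < r0 \<and> r1 < r2 then r1 * (r0 + r2 - r1) else r0 * r2)"
proof (cases "r1 < r0")
  case True
  then obtain u where u: "r0 = r1 + u"
    using less_imp_le_nat le_Suc_ex by blast
  show ?thesis
  proof (cases "r1 < r2")
    case True
    then show ?thesis
      by (simp add: u add_mult_distrib2)
  next
    case False
    then show ?thesis
      by (simp add: u add_mult_distrib)
  qed
qed simp

lemma ad_rank_g3_le:
  fixes x :: "(nat \<times> nat, 'k::field) pmat"
  assumes x: "x \<in> g3 r0 r1 r2"
  shows "ad_rank (P3 r0 r1 r2) (g3 r0 r1 r2) x \<le> min r0 r1 * r2 + (r0 - min r0 r1) * min r1 r2"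
proof -
  define U where "U = (\<lambda>j a. x a (1, j)) ` {..<r1}"
  define V where "V = (\<lambda>j. x (1, j)) ` {..<r1}"
  define E :: "(nat \<times> nat \<Rightarrow> 'k) set" where "E = vunit ` Pair 0 ` {..<r0}"
  define F :: "(nat \<times> nat \<Rightarrow> 'k) set" where "F = vunit ` Pair 2 ` {..<r2}"
  have U_span: "U \<subseteq> vs.span E" and V_span: "V \<subseteq> vs.span F"
    using g3_column_middle_in_span[OF x] g3_row_middle_in_span[OF x]
    by (auto simp: U_def V_def E_def F_def)
  have "ms.span ({outer (\<lambda>a. x a (1, j)) (vunit (2, k)) | j k. j < r1 \<and> k < r2} \<union>
      {outer (vunit (0, i)) (x (1, j)) | i j. i < r0 \<and> j < r1})
    \<subseteq> ms.span ({outer u f | u f. u \<in> U \<and> f \<in> F} \<union> {outer e v | e v. e \<in> E \<and> v \<in> V})"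
    by (rule ms.span_mono) (unfold U_def V_def E_def F_def, blast)
  then have "ad_rank (P3 r0 r1 r2) (g3 r0 r1 r2) x \<le> vs.dim U * card F + (card E - vs.dim U) * vs.dim V"
    unfolding ad_rank_def using g3_ad_image_subset[OF x] U_span V_span
    by (intro dim_le_outer_bound) (auto simp: E_def F_def)
  moreover have "card E \<le> r0" "card F \<le> r2" "card U \<le> r1" "card V \<le> r1"
    unfolding E_def F_def U_def V_def image_image by (auto intro: card_image_le[THEN order_trans])
  moreover have "vs.dim U \<le> card U" "vs.dim U \<le> card E" "vs.dim V \<le> card V" "vs.dim V \<le> card F"
    using U_span V_span by (auto intro!: vs.dim_le_card vs.span_superset simp: U_def V_def E_def F_def)
  ultimately show ?thesis
    using rank_bound_mono[of "vs.dim U" "min r0 r1" r0 "vs.dim V" "min r1 r2" r2]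
      mult_le_mono2[of "card F" r2 "vs.dim U"] mult_le_mono1[of "card E - vs.dim U" "r0 - vs.dim U" "vs.dim V"]
    by linarith
qed

definition g3_witness :: "nat \<Rightarrow> nat \<Rightarrow> nat \<Rightarrow> (nat \<times> nat, 'k::field) pmat" where
  "g3_witness r0 r1 r2 = (\<lambda>p q.
     if (\<exists>i < min r0 r1. p = (0, i) \<and> q = (1, i)) \<or> (\<exists>j < min r1 r2. p = (1, j) \<and> q = (2, j))
     then 1 else 0)"

lemma g3_witness_mem: "g3_witness r0 r1 r2 \<in> g3 r0 r1 r2"
  by (auto simp: g3_eq g3_witness_def prec3_def)

lemma g3_witness_column: "i < min r0 r1 \<Longrightarrow> (\<lambda>a. g3_witness r0 r1 r2 a (1, i)) = vunit (0, i)"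
  by (auto simp: g3_witness_def vunit_def fun_eq_iff)

lemma g3_witness_row: "j < min r1 r2 \<Longrightarrow> g3_witness r0 r1 r2 (1, j) = vunit (2, j)"
  by (auto simp: g3_witness_def vunit_def fun_eq_iff)

lemma g3_witness_ad_image_munit:
  assumes "i < min r0 r1 \<and> k < r2 \<or> i < r0 \<and> k < min r1 r2"
  shows "munit (0, i) (2, k)
    \<in> commutator (P3 r0 r1 r2) (g3_witness r0 r1 r2 :: (nat \<times> nat, 'k::field) pmat) ` g3 r0 r1 r2"
proof -
  let ?P = "P3 r0 r1 r2" and ?x = "g3_witness r0 r1 r2 :: (nat \<times> nat, 'k) pmat"
  have gen_image: "commutator ?P ?x (munit p q) \<in> commutator ?P ?x ` g3 r0 r1 r2"
    if "p \<in> ?P" "q \<in> ?P" "prec3 p q" for p q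
    unfolding g3_def commutator_image_lie_poset_alg using that by (intro ms.span_base) blast
  show ?thesis
  proof (cases "i < min r0 r1")
    case True
    have pq: "(1, i) \<in> ?P" "(2, k) \<in> ?P" "prec3 (1, i) (2, k)"
      using True assms by (auto simp: prec3_def)
    then have "commutator ?P ?x (munit (1, i) (2, k)) = munit (0, i) (2, k)"
      by (simp only: commutator_munit[OF finite_P3] g3_witness_column[OF True]
          g3_row_top[OF g3_witness_mem]) (simp add: munit_eq_outer)
    then show ?thesis
      using gen_image[OF pq] by simp
  next
    case False
    then have k: "k < min r1 r2"
      using assms by auto
    have pq: "(0, i) \<in> ?P" "(1, k) \<in> ?P" "prec3 (0, i) (1, k)"
      using k assms by (auto simp: prec3_def)
    then have "commutator ?P ?x (munit (0, i) (1, k)) = - munit (0, i) (2, k)"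
      by (simp only: commutator_munit[OF finite_P3] g3_witness_row[OF k]
          g3_column_bottom[OF g3_witness_mem]) (simp add: munit_eq_outer)
    then have "commutator ?P ?x (- munit (0, i) (1, k)) = munit (0, i) (2, k)"
      by (simp add: module_hom.neg[OF commutator_linear])
    moreover have "- munit (0, i) (1, k) \<in> g3 r0 r1 r2"
      using pq unfolding g3_def lie_poset_alg_def by (intro ms.span_neg ms.span_base) blast
    ultimately show ?thesis
      by (metis image_eqI)
  qed
qed

lemma ad_rank_g3_witness:
  "min r0 r1 * r2 + (r0 - min r0 r1) * min r1 r2
     \<le> ad_rank (P3 r0 r1 r2) (g3 r0 r1 r2) (g3_witness r0 r1 r2 :: (nat \<times> nat, 'k::field) pmat)"
proof -
  let ?P = "P3 r0 r1 r2" and ?x = "g3_witness r0 r1 r2 :: (nat \<times> nat, 'k) pmat"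
  define Idx where "Idx = {..<min r0 r1} \<times> {..<r2} \<union> {min r0 r1..<r0} \<times> {..<min r1 r2}"
  define S :: "(nat \<times> nat, 'k) pmat set" where
    "S = case_prod munit ` map_prod (Pair 0) (Pair 2) ` Idx"
  have "S \<subseteq> commutator ?P ?x ` g3 r0 r1 r2"
    using g3_witness_ad_image_munit[where 'k = 'k] by (auto simp: S_def Idx_def)
  moreover have "ms.independent S"
    unfolding S_def by (rule independent_munits) (simp add: Idx_def)
  moreover have "commutator ?P ?x ` g3 r0 r1 r2 \<subseteq> ms.span (commutator ?P ?x ` case_prod munit ` (?P \<times> ?P))"
    unfolding g3_def commutator_image_lie_poset_alg by (rule ms.span_mono) force
  ultimately have "card S \<le> ad_rank ?P (g3 r0 r1 r2) ?x"
    unfolding ad_rank_def by (rule card_independent_le_dim) (simp add: finite_P3)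
  moreover have "card S = card (map_prod (Pair (0::nat)) (Pair (2::nat)) ` Idx)"
    unfolding S_def by (rule card_image) (auto simp: inj_on_def munit_eq_iff)
  moreover have "\<dots> = card Idx"
    by (rule card_image) (auto simp: inj_on_def)
  moreover have "card Idx = min r0 r1 * r2 + (r0 - min r0 r1) * min r1 r2"
    unfolding Idx_def by (subst card_Un_disjoint) (auto simp: card_cartesian_product)
  ultimately show ?thesis
    by simp
qed

theorem theorem6:
  fixes r0 r1 r2 :: nat
  assumes "alg_closed TYPE('k::field_char_0)"
    and "r0 \<ge> 1" and "r1 \<ge> 1" and "r2 \<ge> 1"
  shows "breadth (P3 r0 r1 r2) (g3 r0 r1 r2 :: (nat \<times> nat, 'k) pmat set) =
           (if r1 < r0 \<and> r1 < r2 then r1 * (r0 + r2 - r1) else r0 * r2)"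
proof -
  \<comment> \<open>The formula holds over every field and for all \<open>r\<^sub>i\<close>.\<close>
  let ?P = "P3 r0 r1 r2" and ?L = "g3 r0 r1 r2 :: (nat \<times> nat, 'k) pmat set"
  let ?b = "min r0 r1 * r2 + (r0 - min r0 r1) * min r1 r2"
  let ?ranks = "{ad_rank ?P ?L x | x. x \<in> ?L}"
  have upper: "\<And>n. n \<in> ?ranks \<Longrightarrow> n \<le> ?b"
    using ad_rank_g3_le by blast
  have witness: "ad_rank ?P ?L (g3_witness r0 r1 r2) \<in> ?ranks"
    using g3_witness_mem by blast
  then have "?b \<in> ?ranks"
    using antisym[OF upper[OF witness] ad_rank_g3_witness] by simp
  moreover have "finite ?ranks"
    using upper by (meson finite_atMost finite_subset atMost_iff subsetI)
  ultimately have "breadth ?P ?L = ?b"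
    unfolding breadth_def using upper by (intro Max_eqI)
  then show ?thesis
    by (simp add: rank_bound_max)
qed

end
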